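(* Consider the two-server network of re-entrant lines with infinite supply described in the context, and suppose it is critical, i.e. $\sum_{j\in C_1(i)}\mu_{i,j}^{-1}=\sum_{j\in C_2(i)}\mu_{i,j}^{-1}$ for every $i=1,\dots,S$, where $C_\ell(i)=\{j\in\{0,\dots,n_i\}:\sigma(i,j)=\ell\}$. Then the network is non-stabilizable: there is no deterministic stationary non-idling policy under which the associated Markov process has a positive recurrent class that is reached with probability 1.
   Context: There are two servers, labeled 1 and 2, and $S\ge1$ job streams. Stream $i$ has $n_i+1$ operations $(i,0),(i,1),\dots,(i,n_i)$ with $n_i\ge1$; each operation $(i,j)$ is performed by a unique server $\sigma(i,j)\in\{1,2\}$ and completes at exponential rate $\mu_{i,j}>0$ (preemption allowed). Operation $(i,0)$ draws from an infinite supply of raw material and is always available; each operation $(i,j)$ with $j\ge1$ has an associated queue, so there are $M=\sum_i n_i$ queues and the state is the vector of queue lengths in $\mathbb{Z}_+^M$. Completion of $(i,0)$ adds a job to the queue of $(i,1)$; completion of $(i,j)$ for $1\le j\le n_i-1$ moves a job from the queue of $(i,j)$ to the queue of $(i,j+1)$; completion of $(i,n_i)$ removes a job from the queue of $(i,n_i)$. An operation $(i,j)$ with $j\ge1$ may be performed only if its queue is non-empty. A non-idling (deterministic stationary) policy assigns, as a function of the state, to each server one of its operations that may be performed. Given a policy, the chosen operations run simultaneously and the state jumps according to whichever completes first, giving a Markov jump process (equivalently its embedded discrete-time chain). The network is non-stabilizable if no non-idling policy makes this process have a positive recurrent class reached with probability 1. *)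

theory Defs
  imports "HOL-Analysis.Analysis"
begin

text \<open>A chain is given by a transition kernel P x y (probability to jump from x to y).
 first_passage P A n x is the probability that, started in x, the chain enters the set A
 for the first time (at times \<ge> 1) exactly at step n.\<close>

fun first_passage :: "('a \<Rightarrow> 'a \<Rightarrow> real) \<Rightarrow> 'a set \<Rightarrow> nat \<Rightarrow> 'a \<Rightarrow> real" where
  "first_passage P A 0 x = 0"
| "first_passage P A (Suc 0) x = infsum (\<lambda>y. P x y) A"
| "first_passage P A (Suc (Suc n)) x =
     infsum (\<lambda>y. P x y * first_passage P A (Suc n) y) (- A)"

definition hit_prob :: "('a \<Rightarrow> 'a \<Rightarrow> real) \<Rightarrow> 'a set \<Rightarrow> 'a \<Rightarrow> real" where
  "hit_prob P A x = (\<Sum>n. first_passage P A n x)"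

definition reach_prob :: "('a \<Rightarrow> 'a \<Rightarrow> real) \<Rightarrow> 'a set \<Rightarrow> 'a \<Rightarrow> real" where
  "reach_prob P A x = (if x \<in> A then 1 else hit_prob P A x)"

definition positive_recurrent :: "('a \<Rightarrow> 'a \<Rightarrow> real) \<Rightarrow> 'a \<Rightarrow> bool" where
  "positive_recurrent P y \<longleftrightarrow>
     hit_prob P {y} y = 1 \<and> summable (\<lambda>n. real n * first_passage P {y} n y)"

definition accessible :: "('a \<Rightarrow> 'a \<Rightarrow> real) \<Rightarrow> 'a \<Rightarrow> 'a \<Rightarrow> bool" where
  "accessible P x y \<longleftrightarrow> (x, y) \<in> {(a, b). P a b > 0}\<^sup>*"

definition positive_recurrent_class ::
  "('a \<Rightarrow> 'a \<Rightarrow> real) \<Rightarrow> 'a set \<Rightarrow> 'a set \<Rightarrow> bool" where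
  "positive_recurrent_class P SS C \<longleftrightarrow>
     (\<exists>x\<in>SS. C = {y \<in> SS. accessible P x y \<and> accessible P y x})
     \<and> (\<forall>y\<in>C. positive_recurrent P y)"

text \<open>Streams are indexed 0..S-1 (i < S); operations of stream i are (i,j), j \<le> n i;
 queues are (i,j) with 1 \<le> j \<le> n i.\<close>

type_synonym nstate = "nat \<times> nat \<Rightarrow> nat"

definition ops :: "nat \<Rightarrow> (nat \<Rightarrow> nat) \<Rightarrow> (nat \<times> nat) set" where
  "ops S n = {(i, j). i < S \<and> j \<le> n i}"

definition queues :: "nat \<Rightarrow> (nat \<Rightarrow> nat) \<Rightarrow> (nat \<times> nat) set" where
  "queues S n = {(i, j). i < S \<and> 1 \<le> j \<and> j \<le> n i}"

definition state_space :: "nat \<Rightarrow> (nat \<Rightarrow> nat) \<Rightarrow> nstate set" where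
  "state_space S n = {x. \<forall>q. q \<notin> queues S n \<longrightarrow> x q = 0}"

definition performable :: "nstate \<Rightarrow> nat \<times> nat \<Rightarrow> bool" where
  "performable x q \<longleftrightarrow> snd q = 0 \<or> x q > 0"

definition step :: "(nat \<Rightarrow> nat) \<Rightarrow> nstate \<Rightarrow> nat \<times> nat \<Rightarrow> nstate" where
  "step n x q = (case q of (i, j) \<Rightarrow>
     if j = 0 then x((i, 1) := x (i, 1) + 1)
     else if j < n i then x((i, j) := x (i, j) - 1, (i, Suc j) := x (i, Suc j) + 1)
     else x((i, j) := x (i, j) - 1))"

text \<open>A deterministic stationary policy: for each state and server (1 or 2) either an
 operation (Some q) or idling (None).\<close>
type_synonym policy = "nstate \<Rightarrow> nat \<Rightarrow> (nat \<times> nat) option"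

definition non_idling ::
  "nat \<Rightarrow> (nat \<Rightarrow> nat) \<Rightarrow> (nat \<Rightarrow> nat \<Rightarrow> nat) \<Rightarrow> policy \<Rightarrow> bool" where
  "non_idling S n \<sigma> \<pi> \<longleftrightarrow>
     (\<forall>x \<in> state_space S n. \<forall>l \<in> {1, 2::nat}.
        (case \<pi> x l of
           None \<Rightarrow> \<not> (\<exists>q \<in> ops S n. \<sigma> (fst q) (snd q) = l \<and> performable x q)
         | Some q \<Rightarrow> q \<in> ops S n \<and> \<sigma> (fst q) (snd q) = l \<and> performable x q))"

definition server_rate :: "(nat \<Rightarrow> nat \<Rightarrow> real) \<Rightarrow> policy \<Rightarrow> nstate \<Rightarrow> nat \<Rightarrow> real" where
  "server_rate \<mu> \<pi> x l = (case \<pi> x l of None \<Rightarrow> 0 | Some q \<Rightarrow> \<mu> (fst q) (snd q))"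

text \<open>Transition kernel of the embedded jump chain of the Markov jump process.\<close>
definition embedded_kernel ::
  "(nat \<Rightarrow> nat) \<Rightarrow> (nat \<Rightarrow> nat \<Rightarrow> real) \<Rightarrow> policy \<Rightarrow> nstate \<Rightarrow> nstate \<Rightarrow> real" where
  "embedded_kernel n \<mu> \<pi> x y =
     (\<Sum>l \<in> {1, 2::nat}. (case \<pi> x l of None \<Rightarrow> 0
        | Some q \<Rightarrow> if step n x q = y then \<mu> (fst q) (snd q) else 0))
     / (\<Sum>l \<in> {1, 2::nat}. server_rate \<mu> \<pi> x l)"

definition stabilizable ::
  "nat \<Rightarrow> (nat \<Rightarrow> nat) \<Rightarrow> (nat \<Rightarrow> nat \<Rightarrow> nat) \<Rightarrow> (nat \<Rightarrow> nat \<Rightarrow> real) \<Rightarrow> bool" where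
  "stabilizable S n \<sigma> \<mu> \<longleftrightarrow>
     (\<exists>\<pi>. non_idling S n \<sigma> \<pi> \<and>
        (\<exists>C. positive_recurrent_class (embedded_kernel n \<mu> \<pi>) (state_space S n) C \<and>
             (\<forall>x \<in> state_space S n. reach_prob (embedded_kernel n \<mu> \<pi>) C x = 1)))"

definition critical :: "nat \<Rightarrow> (nat \<Rightarrow> nat) \<Rightarrow> (nat \<Rightarrow> nat \<Rightarrow> nat) \<Rightarrow> (nat \<Rightarrow> nat \<Rightarrow> real) \<Rightarrow> bool" where
  "critical S n \<sigma> \<mu> \<longleftrightarrow>
     (\<forall>i < S. (\<Sum>j \<in> {j. j \<le> n i \<and> \<sigma> i j = 1}. 1 / \<mu> i j)
            = (\<Sum>j \<in> {j. j \<le> n i \<and> \<sigma> i j = 2}. 1 / \<mu> i j))"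

end

(*
  Let l be the server of the raw-material operation (0,0); it never idles. Weight a job in
  queue (i,j) by the signed work sum_{k<j} d(i,k), where d(i,k) = -1/mu(i,k) if l performs
  (i,k) and +1/mu(i,k) otherwise, and let W be the total weight of all queued jobs.
  Completing operation (i,j) changes W by exactly d(i,j); at the last operation of a stream
  this is where criticality is used. Under a non-idling policy the mean increment of W per
  jump of the embedded chain is (-1 + [other server busy]) / (total rate) <= 0, and the move
  of server l always changes W. Composing W with the increasing, strictly concave,
  2-Lipschitz function t - sqrt(1 + t^2) yields V with bounded increments and strictly
  negative drift everywhere.

  Such a V excludes positive recurrence of any state y: stopped at the first return time tau
  to y, the process V(X_{N /\ tau}) - V(y) has mean at most the (negative) drift at y, yet its
  absolute mean is at most L N P(tau > N), which tends to 0 when E tau is finite.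
*)

theory Submission
  imports Defs
begin

section \<open>A strictly concave increasing Lipschitz function\<close>

definition concave_ramp :: "real \<Rightarrow> real" where
  "concave_ramp t = t - sqrt (1 + t\<^sup>2)"

definition concave_ramp_slope :: "real \<Rightarrow> real" where
  "concave_ramp_slope t = 1 - t / sqrt (1 + t\<^sup>2)"

lemma sqrt_one_plus_square:
  "0 < sqrt (1 + t\<^sup>2)" "(sqrt (1 + t\<^sup>2))\<^sup>2 = 1 + t\<^sup>2" "\<bar>t\<bar> < sqrt (1 + t\<^sup>2)"
  by (simp_all add: add_pos_nonneg real_less_rsqrt)

lemma concave_ramp_slope_pos: "0 < concave_ramp_slope t"
  using sqrt_one_plus_square[of t] by (simp add: concave_ramp_slope_def divide_less_eq)

lemma concave_ramp_less_tangent: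
  assumes "s \<noteq> t"
  shows "concave_ramp s < concave_ramp t + concave_ramp_slope t * (s - t)"
proof -
  define a where "a = sqrt (1 + s\<^sup>2)"
  define b where "b = sqrt (1 + t\<^sup>2)"
  have a: "0 < a" "a\<^sup>2 = 1 + s\<^sup>2" and b: "0 < b" "b\<^sup>2 = 1 + t\<^sup>2"
    unfolding a_def b_def by (rule sqrt_one_plus_square)+
  \<comment> \<open>Lagrange's identity \<open>(1 + s\<^sup>2)(1 + t\<^sup>2) = (1 + s t)\<^sup>2 + (s - t)\<^sup>2\<close> yields \<open>1 + s t < a b\<close>.\<close>
  have "(a * b)\<^sup>2 = (1 + s\<^sup>2) * (1 + t\<^sup>2)"
    using a b by (simp add: power_mult_distrib)
  also have "\<dots> = (1 + t * s)\<^sup>2 + (s - t)\<^sup>2"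
    by (simp add: power2_eq_square algebra_simps)
  finally have "(a * b)\<^sup>2 = (1 + t * s)\<^sup>2 + (s - t)\<^sup>2" .
  moreover have "0 < (s - t)\<^sup>2"
    using assms by simp
  ultimately have "(1 + t * s)\<^sup>2 < (a * b)\<^sup>2"
    by linarith
  then have "1 + t * s < a * b"
    by (rule power2_less_imp_less) (use a b in simp)
  then have "0 < (a * b - b\<^sup>2 + t\<^sup>2 - t * s) / b"
    using b by simp
  also have "(a * b - b\<^sup>2 + t\<^sup>2 - t * s) / b = (t - b) + (1 - t / b) * (s - t) - (s - a)"
    using b by (simp add: field_simps power2_eq_square)
  finally show ?thesis
    unfolding concave_ramp_def concave_ramp_slope_def a_def b_def by linarith
qed

lemma concave_ramp_le_tangent:
  "concave_ramp s \<le> concave_ramp t + concave_ramp_slope t * (s - t)"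
  by (cases "s = t") (auto intro: less_imp_le concave_ramp_less_tangent)

lemma concave_ramp_lipschitz: "\<bar>concave_ramp s - concave_ramp t\<bar> \<le> 2 * \<bar>s - t\<bar>"
proof -
  define a where "a = sqrt (1 + s\<^sup>2)"
  define b where "b = sqrt (1 + t\<^sup>2)"
  have a: "0 < a" "a\<^sup>2 = 1 + s\<^sup>2" "\<bar>s\<bar> < a" and b: "0 < b" "b\<^sup>2 = 1 + t\<^sup>2" "\<bar>t\<bar> < b"
    unfolding a_def b_def by (rule sqrt_one_plus_square)+
  have "(a - b) * (a + b) = (s - t) * (s + t)"
    using a b by (simp add: algebra_simps power2_eq_square)
  then have "\<bar>a - b\<bar> * (a + b) = \<bar>s - t\<bar> * \<bar>s + t\<bar>"
    using a b by (metis abs_mult abs_of_pos add_pos_pos)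
  also have "\<dots> \<le> \<bar>s - t\<bar> * (a + b)"
    using a b by (intro mult_left_mono) auto
  finally have "\<bar>a - b\<bar> \<le> \<bar>s - t\<bar>"
    using a b by simp
  then show ?thesis
    using abs_triangle_ineq4[of "s - t" "a - b"]
    unfolding concave_ramp_def a_def [symmetric] b_def [symmetric] by (simp add: algebra_simps)
qed

lemma concave_ramp_strict_jensen:
  assumes "finite I" and "\<And>l. l \<in> I \<Longrightarrow> 0 \<le> w l" and "(\<Sum>l\<in>I. w l) = 1"
    and "(\<Sum>l\<in>I. w l * u l) \<le> t" and "j \<in> I" "0 < w j" "u j \<noteq> t"
  shows "(\<Sum>l\<in>I. w l * concave_ramp (u l)) < concave_ramp t"
proof -
  let ?tangent = "\<lambda>u. concave_ramp t + concave_ramp_slope t * (u - t)"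
  have "(\<Sum>l\<in>I. w l * concave_ramp (u l)) < (\<Sum>l\<in>I. w l * ?tangent (u l))"
  proof (rule sum_strict_mono_ex1)
    show "\<forall>l\<in>I. w l * concave_ramp (u l) \<le> w l * ?tangent (u l)"
      using assms(2) by (blast intro: mult_left_mono concave_ramp_le_tangent)
    show "\<exists>l\<in>I. w l * concave_ramp (u l) < w l * ?tangent (u l)"
      using assms(5-7) by (blast intro: mult_strict_left_mono concave_ramp_less_tangent)
  qed fact
  also have "\<dots> = concave_ramp t + concave_ramp_slope t * ((\<Sum>l\<in>I. w l * u l) - t)"
    using assms(3) by (simp add: distrib_left right_diff_distrib sum.distrib sum_subtractf
        sum_distrib_left[symmetric] sum_distrib_right[symmetric] mult.left_commute)
  also have "\<dots> \<le> concave_ramp t"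
    using assms(4) concave_ramp_slope_pos[of t] by (simp add: mult_nonneg_nonpos)
  finally show ?thesis .
qed

section \<open>Chains with finitely many moves per state\<close>

definition branching_kernel ::
  "'l set \<Rightarrow> ('l \<Rightarrow> 'a \<Rightarrow> real) \<Rightarrow> ('l \<Rightarrow> 'a \<Rightarrow> 'a) \<Rightarrow> 'a \<Rightarrow> 'a \<Rightarrow> real" where
  "branching_kernel I p s x z = (\<Sum>l\<in>I. if s l x = z then p l x else 0)"

lemma infsum_branching_kernel:
  assumes "finite I"
  shows "infsum (\<lambda>z. branching_kernel I p s x z * h z) A
    = (\<Sum>l\<in>I. if s l x \<in> A then p l x * h (s l x) else 0)"
proof -
  let ?F = "A \<inter> (\<lambda>l. s l x) ` I"
  have "infsum (\<lambda>z. branching_kernel I p s x z * h z) A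
      = (\<Sum>z\<in>?F. branching_kernel I p s x z * h z)"
    using assms
    by (subst infsum_cong_neutral[where T = ?F]) (auto simp: branching_kernel_def intro!: sum.neutral)
  also have "\<dots> = (\<Sum>l\<in>I. \<Sum>z\<in>?F. if z = s l x then p l x * h z else 0)"
    unfolding branching_kernel_def sum_distrib_right
    by (subst sum.swap) (auto intro!: sum.cong)
  also have "\<dots> = (\<Sum>l\<in>I. if s l x \<in> A then p l x * h (s l x) else 0)"
    using assms by (auto intro!: sum.cong)
  finally show ?thesis .
qed

text \<open>\<open>avoiding_expectation I p s y h N x\<close> is the expectation of \<open>h(X\<^sub>N)\<close> on the event that the
  chain started at \<open>x\<close> does not visit \<open>y\<close> at times \<open>1, \<dots>, N\<close>.\<close>
primrec avoiding_expectation ::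
  "'l set \<Rightarrow> ('l \<Rightarrow> 'a \<Rightarrow> real) \<Rightarrow> ('l \<Rightarrow> 'a \<Rightarrow> 'a) \<Rightarrow> 'a \<Rightarrow> ('a \<Rightarrow> real) \<Rightarrow> nat \<Rightarrow> 'a \<Rightarrow> real"
  where
    "avoiding_expectation I p s y h 0 x = h x"
  | "avoiding_expectation I p s y h (Suc N) x =
      (\<Sum>l\<in>I. if s l x = y then 0 else p l x * avoiding_expectation I p s y h N (s l x))"

lemma summable_if_index_times_summable:
  fixes a :: "nat \<Rightarrow> real"
  assumes "\<And>k. 0 \<le> a k" and "summable (\<lambda>k. real k * a k)"
  shows "summable a"
proof -
  have "norm (a k) \<le> real k * a k" if "1 \<le> k" for k
    using mult_right_mono[of 1 "real k" "a k"] assms(1) that by simp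
  then show ?thesis
    by (blast intro: summable_comparison_test[OF _ assms(2)])
qed

lemma tail_times_index_tendsto_zero:
  fixes a :: "nat \<Rightarrow> real"
  assumes nonneg: "\<And>k. 0 \<le> a k" and summable: "summable (\<lambda>k. real k * a k)"
  shows "(\<lambda>N. real N * (\<Sum>j. a (j + Suc N))) \<longlonglongrightarrow> 0"
proof (rule tendsto_sandwich)
  have "summable a"
    using nonneg summable by (rule summable_if_index_times_summable)
  then show "\<forall>\<^sub>F N in sequentially. 0 \<le> real N * (\<Sum>j. a (j + Suc N))"
    using nonneg
    by (intro always_eventually allI mult_nonneg_nonneg suminf_nonneg summable_ignore_initial_segment)
      auto
  have "real N * (\<Sum>j. a (j + Suc N)) \<le> (\<Sum>j. real (j + Suc N) * a (j + Suc N))" for N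
  proof -
    have tail: "summable (\<lambda>j. a (j + Suc N))"
      using \<open>summable a\<close> by (rule summable_ignore_initial_segment)
    have "real N * (\<Sum>j. a (j + Suc N)) = (\<Sum>j. real N * a (j + Suc N))"
      using suminf_mult[OF tail] by simp
    also have "\<dots> \<le> (\<Sum>j. real (j + Suc N) * a (j + Suc N))"
      by (rule suminf_le[OF _ summable_mult[OF tail] summable_ignore_initial_segment[OF summable]])
        (simp add: nonneg mult_right_mono)
    finally show ?thesis .
  qed
  then show "\<forall>\<^sub>F N in sequentially.
      real N * (\<Sum>j. a (j + Suc N)) \<le> (\<Sum>j. real (j + Suc N) * a (j + Suc N))"
    by simp
  have "(\<lambda>N. (\<Sum>k. real k * a k) - (\<Sum>k<N. real k * a k)) \<longlonglongrightarrow> 0"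
    using tendsto_diff[OF tendsto_const summable_LIMSEQ[OF summable], of "\<Sum>k. real k * a k"]
    by simp
  then have "(\<lambda>N. \<Sum>j. real (j + N) * a (j + N)) \<longlonglongrightarrow> 0"
    by (simp only: suminf_minus_initial_segment[OF summable])
  then show "(\<lambda>N. \<Sum>j. real (j + Suc N) * a (j + Suc N)) \<longlonglongrightarrow> 0"
    by (rule LIMSEQ_Suc)
qed simp

locale branching_chain =
  fixes I :: "'l set" and SS :: "'a set"
    and p :: "'l \<Rightarrow> 'a \<Rightarrow> real" and s :: "'l \<Rightarrow> 'a \<Rightarrow> 'a"
  assumes finite_branches: "finite I"
    and p_nonneg: "\<And>x l. x \<in> SS \<Longrightarrow> l \<in> I \<Longrightarrow> 0 \<le> p l x"
    and p_sum: "\<And>x. x \<in> SS \<Longrightarrow> (\<Sum>l\<in>I. p l x) = 1"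
    and s_closed: "\<And>x l. x \<in> SS \<Longrightarrow> l \<in> I \<Longrightarrow> s l x \<in> SS"
begin

abbreviation kernel :: "'a \<Rightarrow> 'a \<Rightarrow> real" where
  "kernel \<equiv> branching_kernel I p s"

lemma first_passage_Suc_0:
  "first_passage kernel {y} (Suc 0) x = (\<Sum>l\<in>I. if s l x = y then p l x else 0)"
  by (simp add: branching_kernel_def)

lemma first_passage_Suc_Suc:
  "first_passage kernel {y} (Suc (Suc k)) x
    = (\<Sum>l\<in>I. if s l x = y then 0 else p l x * first_passage kernel {y} (Suc k) (s l x))"
  using infsum_branching_kernel[OF finite_branches, of p s x "first_passage kernel {y} (Suc k)" "- {y}"]
  by (auto intro!: sum.cong)

lemma first_passage_nonneg: "x \<in> SS \<Longrightarrow> 0 \<le> first_passage kernel {y} k x"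
proof (induction kernel "{y}" k x rule: first_passage.induct)
  case (2 x)
  then show ?case
    unfolding first_passage_Suc_0 by (auto simp: p_nonneg intro!: sum_nonneg)
next
  case (3 k x)
  then show ?case
    unfolding first_passage_Suc_Suc by (auto simp: p_nonneg s_closed intro!: sum_nonneg)
qed simp

lemma avoiding_expectation_nonneg:
  assumes "x \<in> SS" and "\<And>z. z \<in> SS \<Longrightarrow> 0 \<le> h z"
  shows "0 \<le> avoiding_expectation I p s y h N x"
  using assms(1) by (induction N arbitrary: x) (auto simp: assms(2) p_nonneg s_closed intro!: sum_nonneg)

lemma avoiding_probability:
  assumes "x \<in> SS"
  shows "avoiding_expectation I p s y (\<lambda>_. 1) N x = 1 - (\<Sum>k<N. first_passage kernel {y} (Suc k) x)"
  using assms
proof (induction N arbitrary: x)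
  case (Suc N)
  have "avoiding_expectation I p s y (\<lambda>_. 1) (Suc N) x
      = (\<Sum>l\<in>I. if s l x = y then 0 else p l x)
        - (\<Sum>l\<in>I. if s l x = y then 0
             else p l x * (\<Sum>k<N. first_passage kernel {y} (Suc k) (s l x)))"
    using Suc by (simp add: s_closed right_diff_distrib sum_subtractf[symmetric] if_distrib
        cong: if_cong)
  also have "(\<Sum>l\<in>I. if s l x = y then 0 else p l x)
      = (\<Sum>l\<in>I. p l x) - (\<Sum>l\<in>I. if s l x = y then p l x else 0)"
    unfolding sum_subtractf[symmetric] by (rule sum.cong) auto
  also have "\<dots> = 1 - first_passage kernel {y} (Suc 0) x"
    unfolding first_passage_Suc_0 p_sum[OF Suc.prems] ..
  also have "(\<Sum>l\<in>I. if s l x = y then 0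
               else p l x * (\<Sum>k<N. first_passage kernel {y} (Suc k) (s l x)))
      = (\<Sum>k<N. first_passage kernel {y} (Suc (Suc k)) x)"
    unfolding first_passage_Suc_Suc sum_distrib_left
    by (subst sum.swap) (auto intro!: sum.cong)
  finally show ?case
    unfolding sum.lessThan_Suc_shift by (simp only: diff_diff_eq)
qed simp

lemma avoiding_expectation_Suc_le:
  assumes "x \<in> SS" and "0 \<le> h y"
    and "\<And>z. z \<in> SS \<Longrightarrow> avoiding_expectation I p s y h N z \<le> h z"
  shows "avoiding_expectation I p s y h (Suc N) x \<le> (\<Sum>l\<in>I. p l x * h (s l x))"
  unfolding avoiding_expectation.simps
  using assms by (intro sum_mono) (auto simp: p_nonneg s_closed intro: mult_left_mono)

lemma avoiding_expectation_le:
  assumes "x \<in> SS" and "0 \<le> h y"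
    and supermartingale: "\<And>z. z \<in> SS \<Longrightarrow> (\<Sum>l\<in>I. p l z * h (s l z)) \<le> h z"
  shows "avoiding_expectation I p s y h N x \<le> h x"
  using assms(1)
proof (induction N arbitrary: x)
  case (Suc N)
  then show ?case
    using avoiding_expectation_Suc_le[OF Suc.prems assms(2) Suc.IH] supermartingale[OF Suc.prems]
    by linarith
qed simp

lemma abs_avoiding_expectation_le:
  assumes "x \<in> SS"
    and increments: "\<And>z l. z \<in> SS \<Longrightarrow> l \<in> I \<Longrightarrow> \<bar>h (s l z) - h z\<bar> \<le> L"
  shows "\<bar>avoiding_expectation I p s y h N x\<bar>
    \<le> (\<bar>h x\<bar> + L * real N) * avoiding_expectation I p s y (\<lambda>_. 1) N x"
  using assms(1)
proof (induction N arbitrary: x)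
  case (Suc N)
  let ?B = "\<bar>h x\<bar> + L * real (Suc N)"
  have "\<bar>avoiding_expectation I p s y h (Suc N) x\<bar>
      \<le> (\<Sum>l\<in>I. if s l x = y then 0 else p l x * \<bar>avoiding_expectation I p s y h N (s l x)\<bar>)"
    unfolding avoiding_expectation.simps
    by (rule order_trans[OF sum_abs]) (auto simp: abs_mult p_nonneg Suc.prems intro!: sum_mono)
  also have "\<dots> \<le> (\<Sum>l\<in>I. if s l x = y then 0
      else p l x * (?B * avoiding_expectation I p s y (\<lambda>_. 1) N (s l x)))"
  proof (intro sum_mono)
    fix l assume l: "l \<in> I"
    have "\<bar>h (s l x)\<bar> + L * real N \<le> ?B"
      using increments[OF Suc.prems l] by (simp add: algebra_simps)
    then have "\<bar>avoiding_expectation I p s y h N (s l x)\<bar>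
        \<le> ?B * avoiding_expectation I p s y (\<lambda>_. 1) N (s l x)"
      using Suc.IH[OF s_closed[OF Suc.prems l]]
        avoiding_expectation_nonneg[OF s_closed[OF Suc.prems l], of "\<lambda>_. 1"]
      by (meson mult_right_mono order_trans zero_le_one)
    then show "(if s l x = y then 0 else p l x * \<bar>avoiding_expectation I p s y h N (s l x)\<bar>)
        \<le> (if s l x = y then 0 else p l x * (?B * avoiding_expectation I p s y (\<lambda>_. 1) N (s l x)))"
      using p_nonneg[OF Suc.prems l] by (auto intro: mult_left_mono)
  qed
  also have "\<dots> = ?B * avoiding_expectation I p s y (\<lambda>_. 1) (Suc N) x"
    by (simp add: sum_distrib_left if_distrib mult.left_commute cong: if_cong)
  finally show ?case .
qed simp

lemma avoiding_probability_eq_tail: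
  assumes x: "x \<in> SS" and summable: "summable (\<lambda>k. first_passage kernel {y} k x)"
    and hit: "hit_prob kernel {y} x = 1"
  shows "avoiding_expectation I p s y (\<lambda>_. 1) N x = (\<Sum>j. first_passage kernel {y} (j + Suc N) x)"
proof -
  have "(\<Sum>k<N. first_passage kernel {y} (Suc k) x) = (\<Sum>k<Suc N. first_passage kernel {y} k x)"
    by (subst sum.lessThan_Suc_shift) simp
  then show ?thesis
    using avoiding_probability[OF x] suminf_split_initial_segment[OF summable, of "Suc N"] hit
    by (simp add: hit_prob_def)
qed

text \<open>Optional stopping at the first visit to \<open>y\<close>: up to that time \<open>V - V y\<close> is a
  supermartingale with increments at most \<open>L\<close>, and it vanishes at the visit itself.\<close>
lemma drift_deficit_le_avoiding_probability:
  assumes y: "y \<in> SS"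
    and increments: "\<And>x l. x \<in> SS \<Longrightarrow> l \<in> I \<Longrightarrow> \<bar>V (s l x) - V x\<bar> \<le> L"
    and supermartingale: "\<And>x. x \<in> SS \<Longrightarrow> (\<Sum>l\<in>I. p l x * V (s l x)) \<le> V x"
  shows "V y - (\<Sum>l\<in>I. p l y * V (s l y))
    \<le> L * real (Suc N) * avoiding_expectation I p s y (\<lambda>_. 1) (Suc N) y"
proof -
  define h where "h z = V z - V y" for z
  have h_drift: "(\<Sum>l\<in>I. p l x * h (s l x)) = (\<Sum>l\<in>I. p l x * V (s l x)) - V y" if "x \<in> SS" for x
    using p_sum[OF that] by (simp add: h_def right_diff_distrib sum_subtractf sum_distrib_right[symmetric])
  have "avoiding_expectation I p s y h N z \<le> h z" if "z \<in> SS" for z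
    using that by (rule avoiding_expectation_le) (use h_drift supermartingale in \<open>auto simp: h_def\<close>)
  then have "avoiding_expectation I p s y h (Suc N) y \<le> (\<Sum>l\<in>I. p l y * h (s l y))"
    using y by (intro avoiding_expectation_Suc_le) (simp_all add: h_def)
  also have "\<dots> = (\<Sum>l\<in>I. p l y * V (s l y)) - V y"
    using y by (rule h_drift)
  finally have "V y - (\<Sum>l\<in>I. p l y * V (s l y)) \<le> \<bar>avoiding_expectation I p s y h (Suc N) y\<bar>"
    by linarith
  also have "\<dots> \<le> (\<bar>h y\<bar> + L * real (Suc N)) * avoiding_expectation I p s y (\<lambda>_. 1) (Suc N) y"
    using y by (rule abs_avoiding_expectation_le) (use increments in \<open>simp add: h_def\<close>)
  finally show ?thesis
    by (simp add: h_def del: avoiding_expectation.simps)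
qed

theorem not_positive_recurrent_if_strict_drift:
  assumes y: "y \<in> SS"
    and increments: "\<And>x l. x \<in> SS \<Longrightarrow> l \<in> I \<Longrightarrow> \<bar>V (s l x) - V x\<bar> \<le> L"
    and supermartingale: "\<And>x. x \<in> SS \<Longrightarrow> (\<Sum>l\<in>I. p l x * V (s l x)) \<le> V x"
    and strict_at_y: "(\<Sum>l\<in>I. p l y * V (s l y)) < V y"
  shows "\<not> positive_recurrent kernel y"
proof
  assume "positive_recurrent kernel y"
  define a where "a k = first_passage kernel {y} k y" for k
  have hit: "hit_prob kernel {y} y = 1" and moment: "summable (\<lambda>k. real k * a k)"
    using \<open>positive_recurrent kernel y\<close> unfolding positive_recurrent_def a_def by auto
  have a_nonneg: "0 \<le> a k" for k
    unfolding a_def using y by (rule first_passage_nonneg)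
  have "summable a"
    using a_nonneg moment by (rule summable_if_index_times_summable)
  have survival: "avoiding_expectation I p s y (\<lambda>_. 1) N y = (\<Sum>j. a (j + Suc N))" for N
    using \<open>summable a\<close> unfolding a_def by (rule avoiding_probability_eq_tail[OF y _ hit])
  have "V y - (\<Sum>l\<in>I. p l y * V (s l y)) \<le> L * (real (Suc N) * (\<Sum>j. a (j + Suc (Suc N))))" for N
    using drift_deficit_le_avoiding_probability[OF y increments supermartingale, of N]
    by (simp only: survival mult.assoc)
  moreover have "(\<lambda>N. L * (real (Suc N) * (\<Sum>j. a (j + Suc (Suc N))))) \<longlonglongrightarrow> L * 0"
    using tail_times_index_tendsto_zero[OF a_nonneg moment]
    by (intro tendsto_mult tendsto_const) (rule LIMSEQ_Suc)
  ultimately have "V y - (\<Sum>l\<in>I. p l y * V (s l y)) \<le> L * 0"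
    by (intro LIMSEQ_le_const[of _ "L * 0"]) auto
  then show False
    using strict_at_y by simp
qed

end

section \<open>The critical network under a non-idling policy\<close>

lemma positive_recurrent_classE:
  assumes "positive_recurrent_class P SS C"
  obtains y where "y \<in> SS" and "positive_recurrent P y"
  using assms unfolding positive_recurrent_class_def accessible_def by blast

lemma finite_queues: "finite (queues S n)"
  by (rule finite_subset[of _ "SIGMA i:{..<S}. {..n i}"]) (auto simp: queues_def)

lemma finite_ops: "finite (ops S n)"
  by (rule finite_subset[of _ "SIGMA i:{..<S}. {..n i}"]) (auto simp: ops_def)

lemma step_in_state_space:
  assumes "x \<in> state_space S n" and "(i, j) \<in> ops S n" and "1 \<le> n i" and "performable x (i, j)"
  shows "step n x (i, j) \<in> state_space S n"
  using assms unfolding state_space_def queues_def ops_def step_def performable_def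
  by (auto simp: not_le)

lemma sum_fun_upd_weighted:
  fixes x :: "'a \<Rightarrow> nat" and w :: "'a \<Rightarrow> real"
  assumes "finite Q" and "q \<in> Q"
  shows "(\<Sum>r\<in>Q. real ((x(q := v)) r) * w r) = (\<Sum>r\<in>Q. real (x r) * w r) + (real v - real (x q)) * w q"
proof -
  have "(\<Sum>r\<in>Q - {q}. real ((x(q := v)) r) * w r) = (\<Sum>r\<in>Q - {q}. real (x r) * w r)"
    by (rule sum.cong) auto
  then show ?thesis
    using assms by (simp add: sum.remove algebra_simps)
qed

definition queue_potential :: "nat \<Rightarrow> (nat \<Rightarrow> nat) \<Rightarrow> (nat \<Rightarrow> nat \<Rightarrow> real) \<Rightarrow> nstate \<Rightarrow> real" where
  "queue_potential S n d x = (\<Sum>q\<in>queues S n. real (x q) * (\<Sum>k<snd q. d (fst q) k))"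

lemma queue_potential_step:
  assumes i: "i < S" "j \<le> n i" "1 \<le> n i" and performable: "performable x (i, j)"
    and zero_sum: "(\<Sum>k\<le>n i. d i k) = 0"
  shows "queue_potential S n d (step n x (i, j)) = queue_potential S n d x + d i j"
proof -
  let ?w = "\<lambda>q. \<Sum>k<snd q. d (fst q) k"
  have upd: "(\<Sum>q\<in>queues S n. real ((y(q0 := v)) q) * ?w q)
      = (\<Sum>q\<in>queues S n. real (y q) * ?w q) + (real v - real (y q0)) * ?w q0"
    if "q0 \<in> queues S n" for y :: nstate and q0 v
    using finite_queues that by (rule sum_fun_upd_weighted)
  consider "j = 0" | "0 < j" "j < n i" | "0 < j" "j = n i"
    using i by linarith
  then show ?thesis
  proof cases
    case 1
    then show ?thesis
      using i upd[of "(i, 1)"] by (simp add: queue_potential_def step_def queues_def)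
  next
    case 2
    let ?y = "x((i, j) := x (i, j) - 1)"
    have "x (i, j) > 0"
      using performable 2 by (simp add: performable_def)
    moreover have "(i, j) \<in> queues S n" "(i, Suc j) \<in> queues S n"
      using i 2 by (auto simp: queues_def)
    ultimately show ?thesis
      using 2 upd[of "(i, Suc j)" ?y] upd[of "(i, j)" x]
      by (simp add: queue_potential_def step_def)
  next
    case 3
    have "x (i, j) > 0"
      using performable 3 by (simp add: performable_def)
    moreover have "(i, j) \<in> queues S n"
      using i 3 by (auto simp: queues_def)
    moreover have "(\<Sum>k<j. d i k) = - d i j"
      using zero_sum 3 by (simp add: lessThan_Suc_atMost[symmetric])
    ultimately show ?thesis
      using 3 upd[of "(i, j)" x] by (simp add: queue_potential_def step_def)
  qed
qed

locale nonidling_critical_network =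
  fixes S :: nat and n :: "nat \<Rightarrow> nat" and \<sigma> :: "nat \<Rightarrow> nat \<Rightarrow> nat"
    and \<mu> :: "nat \<Rightarrow> nat \<Rightarrow> real" and \<pi> :: policy
  assumes streams: "1 \<le> S"
    and stream_length: "\<forall>i < S. 1 \<le> n i"
    and servers: "\<forall>i < S. \<forall>j \<le> n i. \<sigma> i j \<in> {1, 2}"
    and rates: "\<forall>i < S. \<forall>j \<le> n i. 0 < \<mu> i j"
    and critical: "critical S n \<sigma> \<mu>"
    and non_idling: "non_idling S n \<sigma> \<pi>"
begin

text \<open>The raw-material operation \<open>(0, 0)\<close> can always be performed, so its server never idles.\<close>
definition lead_server :: nat where
  "lead_server = \<sigma> 0 0"

definition signed_work :: "nat \<Rightarrow> nat \<Rightarrow> real" where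
  "signed_work i j = (if \<sigma> i j = lead_server then -1 else 1) / \<mu> i j"

text \<open>By criticality the weight of a job in queue \<open>(i, j)\<close> equals its remaining work at the lead
  server minus its remaining work at the other server, so this is the difference of the two
  workloads.\<close>
definition workload_gap :: "nstate \<Rightarrow> real" where
  "workload_gap = queue_potential S n signed_work"

definition total_rate :: "nstate \<Rightarrow> real" where
  "total_rate x = (\<Sum>l\<in>{1, 2}. server_rate \<mu> \<pi> x l)"

definition move_prob :: "nat \<Rightarrow> nstate \<Rightarrow> real" where
  "move_prob l x = server_rate \<mu> \<pi> x l / total_rate x"

definition move :: "nat \<Rightarrow> nstate \<Rightarrow> nstate" where
  "move l x = (case \<pi> x l of None \<Rightarrow> x | Some q \<Rightarrow> step n x q)"

lemma lead_server_range: "lead_server \<in> {1, 2}"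
  using streams servers by (auto simp: lead_server_def)

lemma rate_pos: "q \<in> ops S n \<Longrightarrow> 0 < \<mu> (fst q) (snd q)"
  using rates by (auto simp: ops_def)

lemma chosen_operation:
  assumes "x \<in> state_space S n" and "l \<in> {1, 2}" and "\<pi> x l = Some q"
  shows "q \<in> ops S n" and "\<sigma> (fst q) (snd q) = l" and "performable x q"
proof -
  have "case \<pi> x l of None \<Rightarrow> \<not> (\<exists>q \<in> ops S n. \<sigma> (fst q) (snd q) = l \<and> performable x q)
      | Some q \<Rightarrow> q \<in> ops S n \<and> \<sigma> (fst q) (snd q) = l \<and> performable x q"
    using non_idling assms(1,2) unfolding non_idling_def by blast
  then show "q \<in> ops S n" and "\<sigma> (fst q) (snd q) = l" and "performable x q"
    using assms(3) by simp_all
qed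

lemma lead_server_busy:
  assumes "x \<in> state_space S n"
  obtains q where "\<pi> x lead_server = Some q"
proof (cases "\<pi> x lead_server")
  case None
  have "(0, 0) \<in> ops S n" "performable x (0, 0)"
    using streams by (auto simp: ops_def performable_def)
  then show ?thesis
    using lead_server_range non_idling assms None unfolding non_idling_def lead_server_def by force
qed

lemma server_rate_nonneg:
  assumes "x \<in> state_space S n" and "l \<in> {1, 2}"
  shows "0 \<le> server_rate \<mu> \<pi> x l"
  using assms chosen_operation(1)[OF assms] rate_pos
  by (cases "\<pi> x l") (auto simp: server_rate_def less_imp_le)

lemma total_rate_pos:
  assumes "x \<in> state_space S n"
  shows "0 < total_rate x"
proof -
  obtain q where q: "\<pi> x lead_server = Some q"
    using assms by (rule lead_server_busy)
  have "0 < server_rate \<mu> \<pi> x lead_server"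
    using q rate_pos[OF chosen_operation(1)[OF assms lead_server_range q]] by (simp add: server_rate_def)
  moreover have "\<forall>l\<in>{1, 2}. 0 \<le> server_rate \<mu> \<pi> x l"
    using assms server_rate_nonneg by blast
  ultimately show ?thesis
    using lead_server_range unfolding total_rate_def by (auto simp: sum_pos2)
qed

sublocale branching_chain "{1, 2}" "state_space S n" move_prob move
proof
  fix x and l :: nat
  assume x: "x \<in> state_space S n"
  show "(\<Sum>l\<in>{1, 2}. move_prob l x) = 1"
    using total_rate_pos[OF x] by (simp add: move_prob_def total_rate_def add_divide_distrib[symmetric])
  assume l: "l \<in> {1, 2}"
  show "0 \<le> move_prob l x"
    using server_rate_nonneg[OF x l] total_rate_pos[OF x] by (simp add: move_prob_def)
  show "move l x \<in> state_space S n"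
  proof (cases "\<pi> x l")
    case (Some q)
    then show ?thesis
      using chosen_operation[OF x l Some] x stream_length step_in_state_space[of x S n "fst q" "snd q"]
      by (auto simp: move_def ops_def)
  qed (simp add: move_def x)
qed simp

lemma embedded_kernel_eq: "embedded_kernel n \<mu> \<pi> = branching_kernel {1, 2} move_prob move"
proof (intro ext)
  fix x z
  have "(case \<pi> x l of None \<Rightarrow> 0 | Some q \<Rightarrow> if step n x q = z then \<mu> (fst q) (snd q) else 0)
      / total_rate x = (if move l x = z then move_prob l x else 0)" for l
    by (cases "\<pi> x l") (auto simp: move_def move_prob_def server_rate_def)
  then show "embedded_kernel n \<mu> \<pi> x z = branching_kernel {1, 2} move_prob move x z"
    unfolding embedded_kernel_def branching_kernel_def total_rate_def[symmetric]
    by (simp add: add_divide_distrib)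
qed

lemma signed_work_zero_sum:
  assumes "i < S"
  shows "(\<Sum>k\<le>n i. signed_work i k) = 0"
proof -
  define C where "C l = {j. j \<le> n i \<and> \<sigma> i j = l}" for l
  have "{..n i} = C 1 \<union> C 2"
    using servers assms by (auto simp: C_def)
  then have split: "(\<Sum>k\<le>n i. signed_work i k)
      = (\<Sum>k\<in>C 1. signed_work i k) + (\<Sum>k\<in>C 2. signed_work i k)"
    by (simp only:) (rule sum.union_disjoint; auto simp: C_def)
  have on_class: "(\<Sum>k\<in>C l. signed_work i k)
      = (if l = lead_server then -1 else 1) * (\<Sum>k\<in>C l. 1 / \<mu> i k)" for l
    unfolding sum_distrib_left by (rule sum.cong) (auto simp: C_def signed_work_def)
  have "(\<Sum>k\<in>C 1. 1 / \<mu> i k) = (\<Sum>k\<in>C 2. 1 / \<mu> i k)"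
    using critical assms by (simp add: critical_def C_def)
  then show ?thesis
    using lead_server_range by (auto simp: split on_class)
qed

lemma workload_gap_move:
  assumes x: "x \<in> state_space S n" and l: "l \<in> {1, 2}" and q: "\<pi> x l = Some q"
  shows "workload_gap (move l x) = workload_gap x + signed_work (fst q) (snd q)"
proof -
  obtain i j where ij: "q = (i, j)"
    by (cases q)
  then have "i < S" "j \<le> n i"
    using chosen_operation(1)[OF x l q] by (auto simp: ops_def)
  then show ?thesis
    using ij q chosen_operation(3)[OF x l q] stream_length signed_work_zero_sum
    by (simp add: workload_gap_def move_def queue_potential_step)
qed

lemma move_prob_times_increment:
  assumes x: "x \<in> state_space S n" and l: "l \<in> {1, 2}"
  shows "move_prob l x * (workload_gap (move l x) - workload_gap x)
    \<le> (if l = lead_server then -1 else 1) / total_rate x"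
proof (cases "\<pi> x l")
  case None
  then have "l \<noteq> lead_server"
    using lead_server_busy[OF x] by force
  then show ?thesis
    using None total_rate_pos[OF x] by (simp add: move_prob_def server_rate_def)
next
  case (Some q)
  then show ?thesis
    using workload_gap_move[OF x l Some] chosen_operation(2)[OF x l Some]
      rate_pos[OF chosen_operation(1)[OF x l Some]]
    by (simp add: move_prob_def server_rate_def signed_work_def)
qed

lemma workload_gap_drift:
  assumes x: "x \<in> state_space S n"
  shows "(\<Sum>l\<in>{1, 2}. move_prob l x * workload_gap (move l x)) \<le> workload_gap x"
proof -
  have "(\<Sum>l\<in>{1, 2}. move_prob l x * workload_gap (move l x))
      = (\<Sum>l\<in>{1, 2}. move_prob l x * (workload_gap (move l x) - workload_gap x)) + workload_gap x"
    using p_sum[OF x] distrib_right[of "move_prob 1 x" "move_prob 2 x" "workload_gap x"]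
    by (simp add: algebra_simps)
  also have "\<dots> \<le> (\<Sum>l\<in>{1, 2::nat}. (if l = lead_server then -1 else 1) / total_rate x) + workload_gap x"
    using move_prob_times_increment[OF x] by (intro add_right_mono sum_mono) auto
  also have "\<dots> = workload_gap x"
    using lead_server_range by auto
  finally show ?thesis .
qed

lemma lead_server_moves:
  assumes x: "x \<in> state_space S n"
  shows "0 < move_prob lead_server x" and "workload_gap (move lead_server x) \<noteq> workload_gap x"
proof -
  obtain q where q: "\<pi> x lead_server = Some q"
    using x by (rule lead_server_busy)
  have "0 < \<mu> (fst q) (snd q)"
    using rate_pos chosen_operation(1)[OF x lead_server_range q] by blast
  then show "0 < move_prob lead_server x" and "workload_gap (move lead_server x) \<noteq> workload_gap x"
    using q total_rate_pos[OF x] workload_gap_move[OF x lead_server_range q]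
    by (auto simp: move_prob_def server_rate_def signed_work_def)
qed

lemma workload_gap_increment_le:
  assumes x: "x \<in> state_space S n" and l: "l \<in> {1, 2}"
  shows "\<bar>workload_gap (move l x) - workload_gap x\<bar> \<le> (\<Sum>q\<in>ops S n. 1 / \<mu> (fst q) (snd q))"
proof -
  have nonneg: "\<forall>q\<in>ops S n. 0 \<le> 1 / \<mu> (fst q) (snd q)"
    using rate_pos by (simp add: less_imp_le)
  show ?thesis
  proof (cases "\<pi> x l")
    case None
    then show ?thesis
      using nonneg by (simp add: move_def sum_nonneg)
  next
    case (Some q)
    have "\<bar>workload_gap (move l x) - workload_gap x\<bar> = 1 / \<mu> (fst q) (snd q)"
      using workload_gap_move[OF x l Some] rate_pos[OF chosen_operation(1)[OF x l Some]]
      by (simp add: signed_work_def)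
    also have "\<dots> \<le> (\<Sum>q\<in>ops S n. 1 / \<mu> (fst q) (snd q))"
      using finite_ops chosen_operation(1)[OF x l Some] nonneg by (intro member_le_sum) auto
    finally show ?thesis .
  qed
qed

theorem not_positive_recurrent:
  assumes y: "y \<in> state_space S n"
  shows "\<not> positive_recurrent (embedded_kernel n \<mu> \<pi>) y"
proof -
  define V where "V x = concave_ramp (workload_gap x)" for x
  have drift: "(\<Sum>l\<in>{1, 2}. move_prob l x * V (move l x)) < V x" if x: "x \<in> state_space S n" for x
    unfolding V_def
    by (rule concave_ramp_strict_jensen[where j = lead_server])
      (use x lead_server_range lead_server_moves[OF x] workload_gap_drift[OF x] p_sum[OF x] p_nonneg
        in auto)
  have increments: "\<bar>V (move l x) - V x\<bar> \<le> 2 * (\<Sum>q\<in>ops S n. 1 / \<mu> (fst q) (snd q))"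
    if "x \<in> state_space S n" and "l \<in> {1, 2}" for x l
    unfolding V_def
    by (rule order_trans[OF concave_ramp_lipschitz]) (simp add: workload_gap_increment_le[OF that])
  have supermartingale: "(\<Sum>l\<in>{1, 2}. move_prob l x * V (move l x)) \<le> V x"
    if "x \<in> state_space S n" for x
    using drift[OF that] by simp
  show ?thesis
    unfolding embedded_kernel_eq
    using y increments supermartingale drift[OF y] by (rule not_positive_recurrent_if_strict_drift)
qed

end

theorem theorem4:
  fixes S :: nat and n :: "nat \<Rightarrow> nat" and \<sigma> :: "nat \<Rightarrow> nat \<Rightarrow> nat"
    and \<mu> :: "nat \<Rightarrow> nat \<Rightarrow> real"
  assumes "S \<ge> 1"
    and "\<forall>i < S. n i \<ge> 1"
    and "\<forall>i < S. \<forall>j \<le> n i. \<sigma> i j \<in> {1, 2}"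
    and "\<forall>i < S. \<forall>j \<le> n i. \<mu> i j > 0"
    and "critical S n \<sigma> \<mu>"
  shows "\<not> stabilizable S n \<sigma> \<mu>"
proof
  assume "stabilizable S n \<sigma> \<mu>"
  then obtain \<pi> C where policy: "non_idling S n \<sigma> \<pi>"
    and recurrent_class: "positive_recurrent_class (embedded_kernel n \<mu> \<pi>) (state_space S n) C"
    unfolding stabilizable_def by blast
  interpret nonidling_critical_network S n \<sigma> \<mu> \<pi>
    using assms policy by unfold_locales auto
  obtain y where "y \<in> state_space S n" and "positive_recurrent (embedded_kernel n \<mu> \<pi>) y"
    using recurrent_class by (rule positive_recurrent_classE)
  then show False
    using not_positive_recurrent by blast
qed

end
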